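(* Let $\phi:\mathbb{R}\to\mathbb{R}$ be differentiable, $f(z)=A\phi(Bz)$ with $A\in\mathbb{R}^{k_0\times k}$, $B\in\mathbb{R}^{k\times k_0}$, and let $x^{(1)},\dots,x^{(n)}\in\mathbb{R}^{k_0}$. Run gradient descent with learning rate $\gamma>0$ on $\mathcal{L}=\frac12\sum_{i=1}^n\|x^{(i)}-f(x^{(i)})\|_2^2$. If $A^{(0)}=\sum_{i=1}^n x^{(i)}{a_i^{(0)}}^T$ and $B^{(0)}=\sum_{i=1}^n b_i^{(0)}{x^{(i)}}^T$ for vectors $a_i^{(0)},b_i^{(0)}\in\mathbb{R}^k$, then for all time steps $t$ there exist vectors $a_i^{(t)},b_i^{(t)}\in\mathbb{R}^k$ with $A^{(t)}=\sum_{i=1}^n x^{(i)}{a_i^{(t)}}^T$ and $B^{(t)}=\sum_{i=1}^n b_i^{(t)}{x^{(i)}}^T$.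
   Context: $\phi$ is applied coordinatewise. Gradient descent updates $A\leftarrow A-\gamma\nabla_A\mathcal{L}$, $B\leftarrow B-\gamma\nabla_B\mathcal{L}$ simultaneously. *)

theory Defs
  imports "HOL-Analysis.Analysis"
begin

definition outer :: "real ^ 'm \<Rightarrow> real ^ 'n \<Rightarrow> real ^ 'n ^ 'm" where
  "outer u v = (\<chi> r c. u $ r * v $ c)"

definition net :: "(real \<Rightarrow> real) \<Rightarrow> real ^ 'k ^ 'k0 \<Rightarrow> real ^ 'k0 ^ 'k \<Rightarrow> real ^ 'k0 \<Rightarrow> real ^ 'k0" where
  "net \<phi> A B z = A *v (\<chi> j. \<phi> ((B *v z) $ j))"

definition loss :: "(real \<Rightarrow> real) \<Rightarrow> (nat \<Rightarrow> real ^ 'k0) \<Rightarrow> nat \<Rightarrow> real ^ 'k ^ 'k0 \<Rightarrow> real ^ 'k0 ^ 'k \<Rightarrow> real" where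
  "loss \<phi> x n A B = 1/2 * (\<Sum>i = 1..n. (norm (x i - net \<phi> A B (x i)))\<^sup>2)"

end

theory Submission
  imports Defs
begin

(* Both gradients are sums of outer products with the data points on the relevant side.
   The loss depends on B only through the products B x_i, so by the chain rule its gradient in B
   is a sum of terms d_i x_i^T. Its gradient in A is
   - sum_i (x_i - A p_i) p_i^T = A (sum_i p_i p_i^T) - sum_i x_i p_i^T  with p_i = phi(B x_i),
   and the matrices sum_i x_i a_i^T form a subspace closed under right multiplication by any matrix. *)

lemma inner_outer: "outer u v \<bullet> H = u \<bullet> (H *v v)"
  by (simp add: outer_def inner_vec_def matrix_vector_mult_def sum_distrib_left algebra_simps)

lemma outer_zero_left [simp]: "outer 0 v = 0"
  by (simp add: outer_def vec_eq_iff)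

lemma outer_zero_right [simp]: "outer u 0 = 0"
  by (simp add: outer_def vec_eq_iff)

lemma outer_diff_left: "outer (u - w) v = outer u v - outer w v"
  by (simp add: outer_def vec_eq_iff algebra_simps)

lemma outer_matrix_mul: "outer u v ** M = outer u (v v* M)"
  by (simp add: outer_def matrix_matrix_mult_def vector_matrix_mult_def vec_eq_iff sum_distrib_left mult.assoc)

lemma matrix_mul_outer: "M ** outer u v = outer (M *v u) v"
  by (simp add: outer_def matrix_matrix_mult_def matrix_vector_mult_def vec_eq_iff sum_distrib_right mult.assoc)

lemma matrix_mul_sum_distrib_left:
  fixes f :: "'i \<Rightarrow> real ^ 'n ^ 'm"
  shows "M ** sum f I = (\<Sum>i\<in>I. M ** f i)"
  by (induction I rule: infinite_finite_induct) (simp_all add: matrix_add_ldistrib)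

lemma matrix_mul_sum_distrib_right:
  fixes f :: "'i \<Rightarrow> real ^ 'n ^ 'm"
  shows "sum f I ** M = (\<Sum>i\<in>I. f i ** M)"
  by (induction I rule: infinite_finite_induct)
     (simp_all add: matrix_matrix_mult_def vec_eq_iff sum.distrib distrib_right)

lemma bounded_linear_matrix_vector_mul_left: "bounded_linear (\<lambda>A::real ^ 'n ^ 'm. A *v v)"
  by (rule linear_conv_bounded_linear[THEN iffD1], rule linearI)
     (simp_all add: matrix_vector_mult_def vec_eq_iff sum.distrib algebra_simps sum_distrib_left)

lemma has_derivative_vec_lambda:
  fixes f :: "'a::real_normed_vector \<Rightarrow> real ^ 'n"
  assumes "\<And>j. ((\<lambda>y. f y $ j) has_derivative (\<lambda>h. f' h $ j)) F"
  shows "(f has_derivative f') F"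
proof -
  have expand: "g = (\<lambda>y. \<Sum>j\<in>UNIV. (g y $ j) *\<^sub>R axis j 1)" for g :: "'a \<Rightarrow> real ^ 'n"
    by (simp add: fun_eq_iff vec_eq_iff sum_component axis_def if_distrib sum.delta cong: if_cong)
  show ?thesis
    by (subst (1 2) expand) (intro has_derivative_sum has_derivative_scaleR_left assms)
qed

lemma has_derivative_half_sum_sq_norm:
  fixes g :: "'i \<Rightarrow> 'a::real_normed_vector \<Rightarrow> 'b::real_inner"
  assumes "\<And>i. i \<in> I \<Longrightarrow> (g i has_derivative g' i) (at X within S)"
  shows "((\<lambda>Y. 1/2 * (\<Sum>i\<in>I. (norm (g i Y))\<^sup>2)) has_derivative (\<lambda>H. \<Sum>i\<in>I. g i X \<bullet> g' i H))
    (at X within S)"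
proof -
  have "((\<lambda>Y. 1/2 * (\<Sum>i\<in>I. g i Y \<bullet> g i Y)) has_derivative
      (\<lambda>H. 1/2 * (\<Sum>i\<in>I. g i X \<bullet> g' i H + g' i H \<bullet> g i X))) (at X within S)"
    by (intro has_derivative_mult_right has_derivative_sum has_derivative_inner assms)
  then show ?thesis
    by (simp add: power2_norm_eq_inner inner_commute[of "g' _ _"] flip: sum_distrib_left)
qed

lemma gradient_unique:
  fixes G G' :: "'a::real_inner"
  assumes "(f has_derivative (\<lambda>h. G \<bullet> h)) (at X)" and "(f has_derivative (\<lambda>h. G' \<bullet> h)) (at X)"
  shows "G = G'"
proof -
  have "(\<lambda>h. G \<bullet> h) = (\<lambda>h. G' \<bullet> h)"
    using has_derivative_unique[OF assms] .
  then have "(G - G') \<bullet> (G - G') = 0"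
    by (metis inner_diff_left diff_self)
  then show ?thesis
    by simp
qed

definition hidden :: "(real \<Rightarrow> real) \<Rightarrow> real ^ 'k0 ^ 'k \<Rightarrow> real ^ 'k0 \<Rightarrow> real ^ 'k" where
  "hidden \<phi> B z = (\<chi> j. \<phi> ((B *v z) $ j))"

lemma net_eq_hidden: "net \<phi> A B z = A *v hidden \<phi> B z"
  by (simp add: net_def hidden_def)

definition hidden_delta ::
    "(real \<Rightarrow> real) \<Rightarrow> real ^ 'k ^ 'k0 \<Rightarrow> real ^ 'k0 ^ 'k \<Rightarrow> real ^ 'k0 \<Rightarrow> real ^ 'k" where
  "hidden_delta \<phi> A B z = (\<chi> j. ((z - net \<phi> A B z) v* A) $ j * deriv \<phi> ((B *v z) $ j))"

lemma has_derivative_hidden: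
  assumes "\<And>s. \<phi> differentiable (at s)"
  shows "((\<lambda>Y. hidden \<phi> Y z) has_derivative
    (\<lambda>H. \<chi> j. deriv \<phi> ((B *v z) $ j) * (H *v z) $ j)) (at B)"
proof (rule has_derivative_vec_lambda)
  fix j
  have "(\<phi> has_derivative (*) (deriv \<phi> s)) (at s)" for s
    using assms DERIV_deriv_iff_real_differentiable has_field_derivative_def by blast
  moreover have "((\<lambda>Y. (Y *v z) $ j) has_derivative (\<lambda>H. (H *v z) $ j)) (at B)"
    by (intro bounded_linear_imp_has_derivative bounded_linear_compose[OF bounded_linear_vec_nth]
        bounded_linear_matrix_vector_mul_left)
  ultimately show "((\<lambda>Y. hidden \<phi> Y z $ j) has_derivative
      (\<lambda>H. (\<chi> j. deriv \<phi> ((B *v z) $ j) * (H *v z) $ j) $ j)) (at B)"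
    unfolding hidden_def using has_derivative_compose by fastforce
qed

lemma loss_has_derivative_left:
  "((\<lambda>X. loss \<phi> x n X B) has_derivative
    (\<lambda>H. (- (\<Sum>i=1..n. outer (x i - A *v hidden \<phi> B (x i)) (hidden \<phi> B (x i)))) \<bullet> H)) (at A)"
proof -
  have "((\<lambda>X. x i - X *v hidden \<phi> B (x i)) has_derivative (\<lambda>H. - (H *v hidden \<phi> B (x i)))) (at A)" for i
    using has_derivative_diff[OF has_derivative_const
        bounded_linear_imp_has_derivative[OF bounded_linear_matrix_vector_mul_left]]
    by simp
  from has_derivative_half_sum_sq_norm[OF this] show ?thesis
    by (simp add: loss_def net_eq_hidden inner_outer inner_sum_left flip: sum_negf)
qed

lemma loss_has_derivative_right:
  assumes "\<And>s. \<phi> differentiable (at s)"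
  shows "((\<lambda>Y. loss \<phi> x n A Y) has_derivative
    (\<lambda>H. (- (\<Sum>i=1..n. outer (hidden_delta \<phi> A B (x i)) (x i))) \<bullet> H)) (at B)"
proof -
  let ?d = "\<lambda>i H. \<chi> j. deriv \<phi> ((B *v x i) $ j) * (H *v x i) $ j"
  have "((\<lambda>Y. x i - A *v hidden \<phi> Y (x i)) has_derivative (\<lambda>H. - (A *v ?d i H))) (at B)" for i
    using has_derivative_diff[OF has_derivative_const
        bounded_linear.has_derivative[OF matrix_vector_mul_bounded_linear has_derivative_hidden[OF assms]]]
    by simp
  then have "((\<lambda>Y. 1/2 * (\<Sum>i=1..n. (norm (x i - A *v hidden \<phi> Y (x i)))\<^sup>2)) has_derivative
      (\<lambda>H. \<Sum>i=1..n. (x i - A *v hidden \<phi> B (x i)) \<bullet> - (A *v ?d i H))) (at B)"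
    by (rule has_derivative_half_sum_sq_norm)
  moreover have "(x i - A *v hidden \<phi> B (x i)) \<bullet> (A *v ?d i H) = outer (hidden_delta \<phi> A B (x i)) (x i) \<bullet> H"
    for i H
  proof -
    have "(x i - A *v hidden \<phi> B (x i)) \<bullet> (A *v ?d i H)
        = ((x i - net \<phi> A B (x i)) v* A) \<bullet> ?d i H"
      by (simp add: net_eq_hidden dot_lmul_matrix)
    also have "\<dots> = hidden_delta \<phi> A B (x i) \<bullet> (H *v x i)"
      by (simp add: hidden_delta_def inner_vec_def mult.assoc)
    finally show ?thesis
      by (simp add: inner_outer)
  qed
  ultimately show ?thesis
    by (simp add: loss_def net_eq_hidden inner_sum_left flip: sum_negf)
qed

definition left_outer_span :: "(nat \<Rightarrow> real ^ 'm) \<Rightarrow> nat \<Rightarrow> (real ^ 'k ^ 'm) set" where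
  "left_outer_span x n = {A. \<exists>a. A = (\<Sum>i=1..n. outer (x i) (a i))}"

definition right_outer_span :: "(nat \<Rightarrow> real ^ 'm) \<Rightarrow> nat \<Rightarrow> (real ^ 'm ^ 'k) set" where
  "right_outer_span x n = {B. \<exists>b. B = (\<Sum>i=1..n. outer (b i) (x i))}"

lemma subspace_left_outer_span: "subspace (left_outer_span x n)"
  unfolding subspace_def left_outer_span_def
proof safe
  show "\<exists>a. 0 = (\<Sum>i=1..n. outer (x i) (a i))"
    by (rule exI[of _ "\<lambda>_. 0"]) simp
  show "\<exists>c. (\<Sum>i=1..n. outer (x i) (a i)) + (\<Sum>i=1..n. outer (x i) (b i))
      = (\<Sum>i=1..n. outer (x i) (c i))" for a b
    by (rule exI[of _ "\<lambda>i. a i + b i"]) (simp add: outer_def vec_eq_iff sum.distrib algebra_simps)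
  show "\<exists>b. r *\<^sub>R (\<Sum>i=1..n. outer (x i) (a i)) = (\<Sum>i=1..n. outer (x i) (b i))" for r a
    by (rule exI[of _ "\<lambda>i. r *\<^sub>R a i"]) (simp add: outer_def vec_eq_iff sum_distrib_left mult_ac)
qed

lemma subspace_right_outer_span: "subspace (right_outer_span x n)"
  unfolding subspace_def right_outer_span_def
proof safe
  show "\<exists>b. 0 = (\<Sum>i=1..n. outer (b i) (x i))"
    by (rule exI[of _ "\<lambda>_. 0"]) simp
  show "\<exists>c. (\<Sum>i=1..n. outer (a i) (x i)) + (\<Sum>i=1..n. outer (b i) (x i))
      = (\<Sum>i=1..n. outer (c i) (x i))" for a b
    by (rule exI[of _ "\<lambda>i. a i + b i"]) (simp add: outer_def vec_eq_iff sum.distrib algebra_simps)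
  show "\<exists>b. r *\<^sub>R (\<Sum>i=1..n. outer (a i) (x i)) = (\<Sum>i=1..n. outer (b i) (x i))" for r a
    by (rule exI[of _ "\<lambda>i. r *\<^sub>R a i"]) (simp add: outer_def vec_eq_iff sum_distrib_left mult_ac)
qed

lemma left_outer_span_matrix_mul:
  assumes "A \<in> left_outer_span x n"
  shows "A ** M \<in> left_outer_span x n"
proof -
  obtain a where "A = (\<Sum>i=1..n. outer (x i) (a i))"
    using assms by (auto simp: left_outer_span_def)
  then have "A ** M = (\<Sum>i=1..n. outer (x i) (a i v* M))"
    by (simp add: matrix_mul_sum_distrib_right outer_matrix_mul)
  then show ?thesis
    by (auto simp: left_outer_span_def)
qed

lemma residual_gradient_mem_left_outer_span:
  assumes "A \<in> left_outer_span x n"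
  shows "(\<Sum>i=1..n. outer (x i - A *v p i) (p i)) \<in> left_outer_span x n"
proof -
  have split: "(\<Sum>i=1..n. outer (x i - A *v p i) (p i))
      = (\<Sum>i=1..n. outer (x i) (p i)) - A ** (\<Sum>i=1..n. outer (p i) (p i))"
    by (simp add: outer_diff_left sum_subtractf matrix_mul_sum_distrib_left matrix_mul_outer)
  have "(\<Sum>i=1..n. outer (x i) (p i)) \<in> left_outer_span x n"
    by (auto simp: left_outer_span_def)
  from subspace_diff[OF subspace_left_outer_span this left_outer_span_matrix_mul[OF assms]]
  show ?thesis
    unfolding split .
qed

theorem mainTheorem11:
  fixes \<phi> :: "real \<Rightarrow> real" and x :: "nat \<Rightarrow> real ^ 'k0" and n :: nat and \<gamma> :: real
    and A :: "nat \<Rightarrow> real ^ 'k ^ 'k0" and B :: "nat \<Rightarrow> real ^ 'k0 ^ 'k"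
    and GA :: "nat \<Rightarrow> real ^ 'k ^ 'k0" and GB :: "nat \<Rightarrow> real ^ 'k0 ^ 'k"
    and a0 b0 :: "nat \<Rightarrow> real ^ 'k"
  assumes "\<And>z. \<phi> differentiable (at z)"
    and "\<gamma> > 0"
    and "\<And>t. ((\<lambda>X. loss \<phi> x n X (B t)) has_derivative (\<lambda>H. GA t \<bullet> H)) (at (A t))"
    and "\<And>t. ((\<lambda>Y. loss \<phi> x n (A t) Y) has_derivative (\<lambda>H. GB t \<bullet> H)) (at (B t))"
    and "\<And>t. A (Suc t) = A t - \<gamma> *\<^sub>R GA t"
    and "\<And>t. B (Suc t) = B t - \<gamma> *\<^sub>R GB t"
    and "A 0 = (\<Sum>i = 1..n. outer (x i) (a0 i))"
    and "B 0 = (\<Sum>i = 1..n. outer (b0 i) (x i))"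
  shows "\<forall>t. \<exists>a b :: nat \<Rightarrow> real ^ 'k.
           A t = (\<Sum>i = 1..n. outer (x i) (a i)) \<and> B t = (\<Sum>i = 1..n. outer (b i) (x i))"
proof -
  \<comment> \<open>The step size \<gamma> may have any sign.\<close>
  have "A t \<in> left_outer_span x n \<and> B t \<in> right_outer_span x n" for t
  proof (induction t)
    case 0
    show ?case
      using assms(7,8) by (auto simp: left_outer_span_def right_outer_span_def)
  next
    case (Suc t)
    let ?p = "\<lambda>i. hidden \<phi> (B t) (x i)"
    have "GA t = - (\<Sum>i=1..n. outer (x i - A t *v ?p i) (?p i))"
      using gradient_unique[OF assms(3) loss_has_derivative_left] .
    then have A_step: "A (Suc t) = A t + \<gamma> *\<^sub>R (\<Sum>i=1..n. outer (x i - A t *v ?p i) (?p i))"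
      using assms(5) by simp
    have "GB t = - (\<Sum>i=1..n. outer (hidden_delta \<phi> (A t) (B t) (x i)) (x i))"
      using gradient_unique[OF assms(4) loss_has_derivative_right[OF assms(1)]] .
    then have B_step: "B (Suc t) = B t + \<gamma> *\<^sub>R (\<Sum>i=1..n. outer (hidden_delta \<phi> (A t) (B t) (x i)) (x i))"
      using assms(6) by simp
    have "A (Suc t) \<in> left_outer_span x n"
      unfolding A_step using Suc
      by (intro subspace_add[OF subspace_left_outer_span] subspace_scale[OF subspace_left_outer_span]
          residual_gradient_mem_left_outer_span) simp_all
    moreover have "B (Suc t) \<in> right_outer_span x n"
      unfolding B_step using Suc
      by (intro subspace_add[OF subspace_right_outer_span] subspace_scale[OF subspace_right_outer_span])
         (auto simp: right_outer_span_def)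
    ultimately show ?case ..
  qed
  then show ?thesis
    by (auto simp: left_outer_span_def right_outer_span_def)
qed

end
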